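(* Let $F:\mathbb{R}^d\to\mathbb{R}^d$ be $L$-Lipschitz, $G:\mathbb{R}^d\rightrightarrows\mathbb{R}^d$ maximally monotone, the solution set of $0\in F(x)+G(x)$ nonempty, $F+G$ maximally $\rho$-cohypomonotone with $\rho>0$, and $\eta>\rho$. Let $\alpha=1-\frac\rho\eta$, $\beta_k=\frac1{k+2}$, $R=\mathrm{Id}-J_{\eta(F+G)}$, $x^\star$ a solution, and let $(x_k)$ be random iterates with $x_{k+1}=\beta_kx_0+(1-\beta_k)((1-\alpha)x_k+\alpha\widetilde J_{\eta(F+G)}(x_k))$, where $\mathbb{E}_k\|\widetilde J_{\eta(F+G)}(x_k)-J_{\eta(F+G)}(x_k)\|^2\le\varepsilon_k^2$. Then for any $\gamma>0$ and $K\ge1$, $$\frac{\alpha K(K+1)}4\mathbb{E}\|R(x_K)\|^2\le\frac{K+1}{K\alpha}\|x^\star-x_0\|^2+\sum_{k=0}^{K-1}\left(\frac{\alpha(\gamma+1)}{2\gamma}(k+1)(k+2)\mathbb{E}[\varepsilon_k^2]+\frac{\gamma\alpha\,\mathbb{E}\|R(x_k)\|^2}2\right).$$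
   Context: For an operator $A$, $J_A=(\mathrm{Id}+A)^{-1}$. $F+G$ is $\rho$-cohypomonotone if $\langle u-v,x-y\rangle\ge-\rho\|u-v\|^2$ for all $(x,u),(y,v)$ in its graph; maximal means its graph is not strictly contained in that of another $\rho$-cohypomonotone operator. $\mathbb{E}_k$ is expectation conditioned on the randomness of $x_1,\dots,x_k$; $\varepsilon_k$ may be random and measurable with respect to that conditioning. *)

theory Defs
  imports "HOL-Analysis.Analysis" "HOL-Probability.Probability"
begin

definition monotone_op :: "('a::real_inner \<Rightarrow> 'a set) \<Rightarrow> bool" where
  "monotone_op A \<longleftrightarrow> (\<forall>x y u v. u \<in> A x \<longrightarrow> v \<in> A y \<longrightarrow> inner (u - v) (x - y) \<ge> 0)"

definition maximal_monotone_op :: "('a::real_inner \<Rightarrow> 'a set) \<Rightarrow> bool" where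
  "maximal_monotone_op A \<longleftrightarrow> monotone_op A \<and>
     (\<forall>B. monotone_op B \<and> (\<forall>x. A x \<subseteq> B x) \<longrightarrow> B = A)"

definition cohypomonotone_op :: "real \<Rightarrow> ('a::real_inner \<Rightarrow> 'a set) \<Rightarrow> bool" where
  "cohypomonotone_op \<rho> A \<longleftrightarrow>
     (\<forall>x y u v. u \<in> A x \<longrightarrow> v \<in> A y \<longrightarrow> inner (u - v) (x - y) \<ge> - \<rho> * (norm (u - v))\<^sup>2)"

definition maximal_cohypomonotone_op :: "real \<Rightarrow> ('a::real_inner \<Rightarrow> 'a set) \<Rightarrow> bool" where
  "maximal_cohypomonotone_op \<rho> A \<longleftrightarrow> cohypomonotone_op \<rho> A \<and>
     (\<forall>B. cohypomonotone_op \<rho> B \<and> (\<forall>x. A x \<subseteq> B x) \<longrightarrow> B = A)"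

definition op_plus :: "('a::real_vector \<Rightarrow> 'a) \<Rightarrow> ('a \<Rightarrow> 'a set) \<Rightarrow> ('a \<Rightarrow> 'a set)" where
  "op_plus F G = (\<lambda>x. (\<lambda>g. F x + g) ` G x)"

definition op_scale :: "real \<Rightarrow> ('a::real_vector \<Rightarrow> 'a set) \<Rightarrow> ('a \<Rightarrow> 'a set)" where
  "op_scale c A = (\<lambda>x. (\<lambda>u. c *\<^sub>R u) ` A x)"

text \<open>Resolvent J_A = (Id + A)^{-1}, read as a (single-valued) map: J_A x is the y with x \<in> y + A y.\<close>
definition resolvent :: "('a::real_vector \<Rightarrow> 'a set) \<Rightarrow> 'a \<Rightarrow> 'a" where
  "resolvent A x = (THE y. x \<in> (\<lambda>a. y + a) ` A y)"

text \<open>Sigma-algebra generated by the iterates X 0, ..., X k (the conditioning for E_k).\<close>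
definition hist :: "'w measure \<Rightarrow> (nat \<Rightarrow> 'w \<Rightarrow> 'a::topological_space) \<Rightarrow> nat \<Rightarrow> 'w measure" where
  "hist M X k = sigma (space M) (\<Union>i\<in>{..k}. {X i -` A \<inter> space M | A. A \<in> sets borel})"

end

theory Submission
  imports Defs
begin

(* By a
   Debrunner--Flor argument (Brouwer's theorem plus compactness) Id + eta A is onto, so
   J = J_(eta A) is everywhere defined and single-valued, and R = Id - J is
   (1 - rho/eta)-cocoercive with R x* = 0. Along each realisation the Halpern potential
   V_k = (k+1) <R x_k, x_k - x_0> + alpha k (k+1)/2 |R x_k|^2 grows per step by at most the
   k-th summand (cocoercivity, then Young's inequality with parameter gamma), and
   <R x_K, x_K - x*> >= 0 bounds V_K from below. Integrating the pathwise bound and using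
   E |J~ - J|^2 = E E_k |J~ - J|^2 <= E eps_k^2 gives the claim. *)

definition monotone_graph :: "('a::real_inner \<times> 'a) set \<Rightarrow> bool" where
  "monotone_graph S \<longleftrightarrow> (\<forall>p\<in>S. \<forall>q\<in>S. inner (snd p - snd q) (fst p - fst q) \<ge> 0)"

lemma monotone_graph_subset: "monotone_graph S \<Longrightarrow> T \<subseteq> S \<Longrightarrow> monotone_graph T"
  unfolding monotone_graph_def by blast

lemma monotone_graph_convex_combination_nonpos:
  fixes P :: "('a::real_inner \<times> 'a) set" and l :: "'a \<times> 'a \<Rightarrow> real"
  assumes fin: "finite P" and mono: "monotone_graph P"
    and sum1: "sum l P = 1" and nonneg: "\<And>p. p \<in> P \<Longrightarrow> l p \<ge> 0"
    and x: "x = (\<Sum>p\<in>P. l p *\<^sub>R fst p)"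
  shows "(\<Sum>p\<in>P. l p * inner (x + snd p) (x - fst p)) \<le> 0"
proof -
  have x_minus: "x - fst p = (\<Sum>q\<in>P. l q *\<^sub>R (fst q - fst p))" for p
  proof -
    have "(\<Sum>q\<in>P. l q *\<^sub>R (fst q - fst p)) = x - (\<Sum>q\<in>P. l q) *\<^sub>R fst p"
      by (simp add: x scaleR_diff_right sum_subtractf scaleR_sum_left)
    then show ?thesis using sum1 by simp
  qed
  have "(\<Sum>p\<in>P. l p * inner x (x - fst p)) = inner x (\<Sum>p\<in>P. l p *\<^sub>R (x - fst p))"
    by (simp add: inner_sum_right)
  also have "(\<Sum>p\<in>P. l p *\<^sub>R (x - fst p)) = (\<Sum>p\<in>P. l p) *\<^sub>R x - x"
    by (simp add: x scaleR_diff_right sum_subtractf scaleR_sum_left)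
  finally have x_part: "(\<Sum>p\<in>P. l p * inner x (x - fst p)) = 0"
    using sum1 by simp
  define T where "T = (\<Sum>p\<in>P. \<Sum>q\<in>P. l p * l q * inner (snd p) (fst q - fst p))"
  have snd_part: "(\<Sum>p\<in>P. l p * inner (snd p) (x - fst p)) = T"
    unfolding T_def x_minus by (simp add: inner_sum_right sum_distrib_left mult.assoc)
  have T_swap: "T = (\<Sum>p\<in>P. \<Sum>q\<in>P. l p * l q * inner (snd q) (fst p - fst q))"
    unfolding T_def by (subst sum.swap) (simp add: mult.commute)
  \<comment> \<open>symmetrising the double sum exhibits monotonicity of every pair\<close>
  have "2 * T = (\<Sum>p\<in>P. \<Sum>q\<in>P. - (l p * l q * inner (snd p - snd q) (fst p - fst q)))"
    unfolding mult_2 apply (subst (2) T_swap) unfolding T_def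
    by (simp add: sum.distrib[symmetric] inner_diff_left inner_diff_right algebra_simps)
  also have "\<dots> \<le> 0"
    using mono unfolding monotone_graph_def
    by (intro sum_nonpos) (auto intro!: mult_nonneg_nonneg nonneg)
  finally have "T \<le> 0" by simp
  moreover have "(\<Sum>p\<in>P. l p * inner (x + snd p) (x - fst p))
      = (\<Sum>p\<in>P. l p * inner x (x - fst p)) + (\<Sum>p\<in>P. l p * inner (snd p) (x - fst p))"
    by (simp add: inner_add_left distrib_left sum.distrib)
  ultimately show ?thesis using x_part snd_part by simp
qed

lemma debrunner_flor_finite:
  fixes P :: "('a::euclidean_space \<times> 'a) set"
  assumes fin: "finite P" and ne: "P \<noteq> {}" and mono: "monotone_graph P"
  shows "\<exists>x. \<forall>p\<in>P. inner (x + snd p) (x - fst p) \<le> 0"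
proof (rule ccontr)
  assume "\<not> ?thesis"
  then have violated: "\<And>x. \<exists>p\<in>P. inner (x + snd p) (x - fst p) > 0" by (auto simp: not_le)
  define \<psi> :: "'a \<times> 'a \<Rightarrow> 'a \<Rightarrow> real" where "\<psi> p x = max 0 (inner (x + snd p) (x - fst p))" for p x
  define S where "S x = (\<Sum>p\<in>P. \<psi> p x)" for x
  have \<psi>_nonneg: "\<psi> p x \<ge> 0" for p x by (simp add: \<psi>_def)
  have S_pos: "S x > 0" for x
  proof -
    obtain p where p: "p \<in> P" "inner (x + snd p) (x - fst p) > 0" using violated by blast
    have "\<psi> p x \<le> S x" unfolding S_def by (rule member_le_sum) (auto simp: \<psi>_nonneg p fin)
    moreover have "\<psi> p x > 0" using p by (simp add: \<psi>_def)
    ultimately show ?thesis by simp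
  qed
  have weights_sum: "(\<Sum>p\<in>P. \<psi> p x / S x) = 1" for x
    using S_pos[of x] by (simp add: S_def sum_divide_distrib[symmetric])
  \<comment> \<open>a continuous partition of unity subordinate to the violated constraints\<close>
  define f where "f x = (\<Sum>p\<in>P. (\<psi> p x / S x) *\<^sub>R fst p)" for x
  define C where "C = convex hull (fst ` P)"
  have cont_\<psi>: "continuous_on UNIV (\<psi> p)" for p
    unfolding \<psi>_def by (intro continuous_intros)
  have cont_S: "continuous_on UNIV S"
    unfolding S_def by (intro continuous_intros cont_\<psi>)
  have "continuous_on C f"
    unfolding f_def
    by (intro continuous_intros continuous_on_subset[OF cont_\<psi>] continuous_on_subset[OF cont_S])
       (auto simp: S_pos[THEN less_imp_neq, symmetric] dest: sym)
  moreover have "f \<in> C \<rightarrow> C"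
  proof
    fix x show "f x \<in> C" unfolding f_def C_def
      by (rule convex_sum[OF fin]) (auto simp: weights_sum \<psi>_nonneg S_pos less_imp_le hull_inc)
  qed
  moreover have "compact C" "convex C" "C \<noteq> {}"
    using fin ne by (simp_all add: C_def finite_imp_compact_convex_hull)
  ultimately obtain x where "f x = x"
    using brouwer[of C f] by blast
  then have "(\<Sum>p\<in>P. (\<psi> p x / S x) * inner (x + snd p) (x - fst p)) \<le> 0"
    by (intro monotone_graph_convex_combination_nonpos[OF fin mono weights_sum])
       (auto simp: \<psi>_nonneg S_pos less_imp_le f_def)
  moreover obtain p where p: "p \<in> P" "inner (x + snd p) (x - fst p) > 0" using violated by blast
  then have "0 < (\<psi> p x / S x) * inner (x + snd p) (x - fst p)"
    using S_pos[of x] by (simp add: \<psi>_def)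
  moreover have "\<dots> \<le> (\<Sum>p\<in>P. (\<psi> p x / S x) * inner (x + snd p) (x - fst p))"
  proof (rule member_le_sum)
    fix q
    have "0 \<le> \<psi> q x * inner (x + snd q) (x - fst q)"
      by (simp add: \<psi>_def max_def)
    then show "0 \<le> \<psi> q x / S x * inner (x + snd q) (x - fst q)"
      using S_pos[of x] by simp
  qed (use fin p in auto)
  ultimately show False by simp
qed

lemma compact_inner_diameter:
  fixes a b :: "'a::euclidean_space"
  shows "compact {x. 0 \<le> inner (a - x) (x - b)}"
proof -
  have "{x. 0 \<le> inner (a - x) (x - b)} \<subseteq> cball ((1/2) *\<^sub>R (a + b)) (norm (a - b) / 2)"
  proof
    fix x assume "x \<in> {x. 0 \<le> inner (a - x) (x - b)}"
    then have "0 \<le> inner (a - x) (x - b)" by simp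
    moreover have "4 * inner (a - x) (x - b) = (norm (a - b))\<^sup>2 - (norm (2 *\<^sub>R x - a - b))\<^sup>2"
      by (simp add: power2_norm_eq_inner inner_diff_left inner_diff_right inner_add_left
          inner_add_right inner_commute algebra_simps)
    ultimately have "(norm (2 *\<^sub>R x - a - b))\<^sup>2 \<le> (norm (a - b))\<^sup>2" by linarith
    then have "norm (2 *\<^sub>R x - a - b) \<le> norm (a - b)" by (rule power2_le_imp_le) simp
    moreover have "2 *\<^sub>R x - a - b = 2 *\<^sub>R (x - (1/2) *\<^sub>R (a + b))" by (simp add: algebra_simps)
    ultimately show "x \<in> cball ((1/2) *\<^sub>R (a + b)) (norm (a - b) / 2)"
      by (simp add: dist_norm norm_minus_commute)
  qed
  then have "bounded {x. 0 \<le> inner (a - x) (x - b)}" by (rule bounded_subset[OF bounded_cball])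
  moreover have "closed {x. 0 \<le> inner (a - x) (x - b)}"
    by (intro closed_Collect_le continuous_intros)
  ultimately show ?thesis by (simp add: compact_eq_bounded_closed)
qed

lemma debrunner_flor:
  fixes S :: "('a::euclidean_space \<times> 'a) set"
  assumes mono: "monotone_graph S"
  shows "\<exists>x. \<forall>p\<in>S. inner (z - x - snd p) (x - fst p) \<ge> 0"
proof (cases "S = {}")
  case False
  then obtain p0 where p0: "p0 \<in> S" by blast
  define C where "C p = {x. 0 \<le> inner (z - snd p - x) (x - fst p)}" for p
  have "C p0 \<inter> (\<Inter>p\<in>S. C p) \<noteq> {}"
  proof (rule compact_imp_fip_image)
    show "compact (C p0)" unfolding C_def by (rule compact_inner_diameter)
    show "closed (C p)" for p unfolding C_def by (intro closed_Collect_le continuous_intros)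
    fix I assume I: "finite I" "I \<subseteq> S"
    define P where "P = (\<lambda>p. (fst p, snd p - z)) ` insert p0 I"
    have "monotone_graph (insert p0 I)"
      using I p0 by (intro monotone_graph_subset[OF mono]) auto
    then have "monotone_graph P"
      unfolding monotone_graph_def P_def by auto
    then obtain x where x: "\<forall>p\<in>P. inner (x + snd p) (x - fst p) \<le> 0"
      using debrunner_flor_finite[of P] I by (auto simp: P_def)
    have "x \<in> C p" if "p \<in> insert p0 I" for p
    proof -
      have "inner (x + (snd p - z)) (x - fst p) \<le> 0" using x that unfolding P_def by auto
      moreover have "z - snd p - x = - (x + (snd p - z))" by (simp add: algebra_simps)
      ultimately show ?thesis unfolding C_def by (simp only: mem_Collect_eq inner_minus_left)
    qed
    then show "C p0 \<inter> (\<Inter>p\<in>I. C p) \<noteq> {}" by blast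
  qed
  then show ?thesis unfolding C_def by (auto simp: algebra_simps)
qed simp

lemma cohypomonotone_op_fun_upd_insert:
  assumes A: "cohypomonotone_op \<rho> A"
    and related: "\<And>a w. w \<in> A a \<Longrightarrow> inner (s - w) (y - a) \<ge> - \<rho> * (norm (s - w))\<^sup>2"
  shows "cohypomonotone_op \<rho> (A(y := insert s (A y)))"
  unfolding cohypomonotone_op_def
proof (intro allI impI)
  fix x1 x2 u1 u2
  assume u1: "u1 \<in> (A(y := insert s (A y))) x1" and u2: "u2 \<in> (A(y := insert s (A y))) x2"
  have swap: "inner (u - v) (x - x') = inner (v - u) (x' - x)" for u v x x' :: 'a
    by (metis inner_minus_left inner_minus_right minus_diff_eq)
  consider "u1 \<in> A x1" "u2 \<in> A x2" | "u1 \<in> A x1" "x2 = y" "u2 = s"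
    | "x1 = y" "u1 = s" "u2 \<in> A x2" | "x1 = y" "u1 = s" "x2 = y" "u2 = s"
    using u1 u2 by (auto split: if_splits)
  then show "inner (u1 - u2) (x1 - x2) \<ge> - \<rho> * (norm (u1 - u2))\<^sup>2"
  proof cases
    case 1
    with A show ?thesis by (simp add: cohypomonotone_op_def)
  next
    case 2
    with related[of u1 x1] show ?thesis by (simp add: swap[of u1] norm_minus_commute)
  next
    case 3
    with related[of u2 x2] show ?thesis by simp
  qed simp
qed

lemma maximal_cohypomonotone_op_memI:
  assumes "maximal_cohypomonotone_op \<rho> A"
    and "\<And>a w. w \<in> A a \<Longrightarrow> inner (s - w) (y - a) \<ge> - \<rho> * (norm (s - w))\<^sup>2"
  shows "s \<in> A y"
proof -
  have "cohypomonotone_op \<rho> A"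
    using assms(1) by (simp add: maximal_cohypomonotone_op_def)
  then have "cohypomonotone_op \<rho> (A(y := insert s (A y)))"
    using assms(2) by (rule cohypomonotone_op_fun_upd_insert)
  moreover have "\<forall>x. A x \<subseteq> (A(y := insert s (A y))) x" by auto
  ultimately have "A(y := insert s (A y)) = A"
    using assms(1) unfolding maximal_cohypomonotone_op_def by blast
  moreover have "s \<in> (A(y := insert s (A y))) y" by simp
  ultimately show ?thesis by simp
qed

lemma inner_shear:
  fixes a a' w w' :: "'a::real_inner"
  shows "inner ((a + \<rho> *\<^sub>R w) - (a' + \<rho> *\<^sub>R w')) (c *\<^sub>R w - c *\<^sub>R w')
    = c * (inner (w - w') (a - a') + \<rho> * (norm (w - w'))\<^sup>2)"
  by (simp add: inner_diff_left inner_diff_right inner_add_left power2_norm_eq_inner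
      inner_commute algebra_simps)

text \<open>Surjectivity of \<open>Id + \<eta>A\<close> (Minty): the graph of \<open>A\<close>, sheared to
  \<open>{((\<eta> - \<rho>) w, a + \<rho> w) | w \<in> A a}\<close>, is monotone; the Debrunner--Flor point for it
  yields \<open>(y, s)\<close> with \<open>z = y + \<eta> s\<close> that is cohypomonotonically related to every pair of
  \<open>A\<close>, so \<open>s \<in> A y\<close> by maximality.\<close>

lemma maximal_cohypomonotone_resolvent_ex:
  fixes A :: "'a::euclidean_space \<Rightarrow> 'a set"
  assumes max: "maximal_cohypomonotone_op \<rho> A" and eta: "\<eta> > \<rho>"
  shows "\<exists>y. \<exists>u\<in>A y. z = y + \<eta> *\<^sub>R u"
proof -
  have A: "cohypomonotone_op \<rho> A" using max by (simp add: maximal_cohypomonotone_op_def)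
  define c where "c = \<eta> - \<rho>"
  have c: "c > 0" using eta by (simp add: c_def)
  define S where "S = {(c *\<^sub>R w, a + \<rho> *\<^sub>R w) | a w. w \<in> A a}"
  have "0 \<le> inner (w - w') (a - a') + \<rho> * (norm (w - w'))\<^sup>2"
    if "w \<in> A a" "w' \<in> A a'" for a a' w w'
    using A that unfolding cohypomonotone_op_def by force
  then have "monotone_graph S"
    unfolding monotone_graph_def S_def using c by (auto simp: inner_shear)
  then obtain \<sigma> where \<sigma>: "\<forall>p\<in>S. inner (z - \<sigma> - snd p) (\<sigma> - fst p) \<ge> 0"
    using debrunner_flor by blast
  define s where "s = (1 / c) *\<^sub>R \<sigma>"
  define y where "y = z - \<sigma> - \<rho> *\<^sub>R s"
  have \<sigma>_eq: "\<sigma> = c *\<^sub>R s" and z_eq: "z - \<sigma> = y + \<rho> *\<^sub>R s"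
    using c by (simp_all add: s_def y_def)
  have "s \<in> A y"
  proof (rule maximal_cohypomonotone_op_memI[OF max])
    fix a w assume "w \<in> A a"
    then have "(c *\<^sub>R w, a + \<rho> *\<^sub>R w) \<in> S" by (auto simp: S_def)
    then have "0 \<le> inner (z - \<sigma> - (a + \<rho> *\<^sub>R w)) (\<sigma> - c *\<^sub>R w)"
      using \<sigma> by fastforce
    also have "\<dots> = c * (inner (s - w) (y - a) + \<rho> * (norm (s - w))\<^sup>2)"
      unfolding z_eq unfolding \<sigma>_eq by (rule inner_shear)
    finally have "0 \<le> c * (inner (s - w) (y - a) + \<rho> * (norm (s - w))\<^sup>2)" .
    then show "inner (s - w) (y - a) \<ge> - \<rho> * (norm (s - w))\<^sup>2"
      using c by (simp add: zero_le_mult_iff)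
  qed
  moreover have "z = y + \<eta> *\<^sub>R s"
    by (simp add: y_def \<sigma>_eq c_def algebra_simps)
  ultimately show ?thesis by blast
qed

lemma cohypomonotone_resolvent_unique:
  assumes A: "cohypomonotone_op \<rho> A" and eta: "\<eta> > \<rho>"
    and u: "u \<in> A y" and u': "u' \<in> A y'" and eq: "y + \<eta> *\<^sub>R u = y' + \<eta> *\<^sub>R u'"
  shows "y = y'"
proof -
  have y_diff: "y - y' = - \<eta> *\<^sub>R (u - u')" using eq by (simp add: algebra_simps)
  have "- \<eta> * (norm (u - u'))\<^sup>2 = inner (u - u') (y - y')"
    by (simp add: y_diff power2_norm_eq_inner)
  also have "\<dots> \<ge> - \<rho> * (norm (u - u'))\<^sup>2"
    using A u u' unfolding cohypomonotone_op_def by blast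
  finally have "(\<eta> - \<rho>) * (norm (u - u'))\<^sup>2 \<le> 0" by (simp add: algebra_simps)
  then have "u = u'" using eta by (simp add: mult_le_0_iff)
  then show ?thesis using y_diff by simp
qed

lemma resolvent_op_scale_graph_iff:
  "z \<in> (\<lambda>a. y + a) ` op_scale \<eta> A y \<longleftrightarrow> (\<exists>u\<in>A y. z = y + \<eta> *\<^sub>R u)"
  unfolding op_scale_def by auto

lemma resolvent_op_scale_eqI:
  assumes A: "cohypomonotone_op \<rho> A" and eta: "\<eta> > \<rho>"
    and u: "u \<in> A y" and z: "z = y + \<eta> *\<^sub>R u"
  shows "resolvent (op_scale \<eta> A) z = y"
  unfolding resolvent_def resolvent_op_scale_graph_iff
proof (rule the_equality)
  show "\<exists>u\<in>A y. z = y + \<eta> *\<^sub>R u" using u z by blast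
  show "y' = y" if y': "\<exists>u'\<in>A y'. z = y' + \<eta> *\<^sub>R u'" for y'
  proof -
    obtain u' where u': "u' \<in> A y'" "z = y' + \<eta> *\<^sub>R u'" using y' by blast
    show ?thesis
      by (rule cohypomonotone_resolvent_unique[OF A eta u'(1) u]) (use u'(2) z in simp)
  qed
qed

lemma maximal_cohypomonotone_resolvent:
  fixes A :: "'a::euclidean_space \<Rightarrow> 'a set"
  assumes max: "maximal_cohypomonotone_op \<rho> A" and eta: "\<eta> > \<rho>"
  shows "\<exists>u\<in>A (resolvent (op_scale \<eta> A) z). z = resolvent (op_scale \<eta> A) z + \<eta> *\<^sub>R u"
proof -
  have A: "cohypomonotone_op \<rho> A" using max by (simp add: maximal_cohypomonotone_op_def)
  obtain y u where u: "u \<in> A y" "z = y + \<eta> *\<^sub>R u"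
    using maximal_cohypomonotone_resolvent_ex[OF max eta] by blast
  then have J: "resolvent (op_scale \<eta> A) z = y" by (rule resolvent_op_scale_eqI[OF A eta])
  show ?thesis unfolding J using u by blast
qed

definition cocoercive :: "real \<Rightarrow> ('a::real_inner \<Rightarrow> 'a) \<Rightarrow> bool" where
  "cocoercive \<alpha> T \<longleftrightarrow> (\<forall>z1 z2. inner (T z1 - T z2) (z1 - z2) \<ge> \<alpha> * (norm (T z1 - T z2))\<^sup>2)"

lemma maximal_cohypomonotone_resolvent_residual_cocoercive:
  fixes A :: "'a::euclidean_space \<Rightarrow> 'a set"
  assumes max: "maximal_cohypomonotone_op \<rho> A" and rho: "\<rho> \<ge> 0" and eta: "\<eta> > \<rho>"
  shows "cocoercive (1 - \<rho> / \<eta>) (\<lambda>z. z - resolvent (op_scale \<eta> A) z)"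
  unfolding cocoercive_def
proof (intro allI)
  fix z1 z2
  define J where "J = resolvent (op_scale \<eta> A)"
  have A: "cohypomonotone_op \<rho> A" using max by (simp add: maximal_cohypomonotone_op_def)
  have e: "\<eta> > 0" using eta rho by simp
  obtain u1 u2 where u1: "u1 \<in> A (J z1)" "z1 = J z1 + \<eta> *\<^sub>R u1"
    and u2: "u2 \<in> A (J z2)" "z2 = J z2 + \<eta> *\<^sub>R u2"
    unfolding J_def using maximal_cohypomonotone_resolvent[OF max eta] by meson
  have R_diff: "(z1 - J z1) - (z2 - J z2) = \<eta> *\<^sub>R (u1 - u2)"
    using u1(2) u2(2) by (simp add: algebra_simps)
  have J_diff: "J z1 - J z2 = (z1 - z2) - \<eta> *\<^sub>R (u1 - u2)"
    using u1(2) u2(2) by (simp add: algebra_simps)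
  have "inner (u1 - u2) (J z1 - J z2) \<ge> - \<rho> * (norm (u1 - u2))\<^sup>2"
    using A u1(1) u2(1) unfolding cohypomonotone_op_def by blast
  then have "inner (u1 - u2) (z1 - z2) \<ge> (\<eta> - \<rho>) * (norm (u1 - u2))\<^sup>2"
    unfolding J_diff by (simp add: inner_diff_right power2_norm_eq_inner algebra_simps)
  then have "\<eta> * inner (u1 - u2) (z1 - z2) \<ge> \<eta> * ((\<eta> - \<rho>) * (norm (u1 - u2))\<^sup>2)"
    using e by simp
  moreover have "\<eta> * ((\<eta> - \<rho>) * (norm (u1 - u2))\<^sup>2) = (1 - \<rho> / \<eta>) * (norm (\<eta> *\<^sub>R (u1 - u2)))\<^sup>2"
    using e by (simp only: norm_scaleR abs_of_pos) (simp add: power2_eq_square field_simps)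
  ultimately show "inner ((z1 - J z1) - (z2 - J z2)) (z1 - z2)
      \<ge> (1 - \<rho> / \<eta>) * (norm ((z1 - J z1) - (z2 - J z2)))\<^sup>2"
    unfolding R_diff by simp
qed

lemma cocoercive_lipschitz:
  assumes a: "\<alpha> > 0" and T: "cocoercive \<alpha> T"
  shows "(1 / \<alpha>)-lipschitz_on UNIV T"
proof (rule lipschitz_onI)
  fix z1 z2
  have "\<alpha> * (norm (T z1 - T z2))\<^sup>2 \<le> inner (T z1 - T z2) (z1 - z2)"
    using T unfolding cocoercive_def by blast
  also have "\<dots> \<le> norm (T z1 - T z2) * norm (z1 - z2)"
    by (rule norm_cauchy_schwarz)
  finally have "norm (T z1 - T z2) * (\<alpha> * norm (T z1 - T z2)) \<le> norm (T z1 - T z2) * norm (z1 - z2)"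
    by (simp add: power2_eq_square ac_simps)
  then have "\<alpha> * norm (T z1 - T z2) \<le> norm (z1 - z2)"
    by (cases "norm (T z1 - T z2) = 0") (use a in auto)
  then show "dist (T z1) (T z2) \<le> 1 / \<alpha> * dist z1 z2"
    using a by (simp add: dist_norm field_simps)
qed (use a in simp)

lemma cocoercive_inner_nonneg:
  assumes "cocoercive \<alpha> T" "\<alpha> \<ge> 0" "T xs = 0"
  shows "inner (T x) (x - xs) \<ge> 0"
  using assms unfolding cocoercive_def by (metis diff_zero mult_nonneg_nonneg zero_le_power2 order_trans)

lemma halpern_step_shift:
  fixes x x0 v :: "'a::real_vector"
  assumes "x = (1 / (real k + 2)) *\<^sub>R x0 + (1 - 1 / (real k + 2)) *\<^sub>R v"
  shows "(real k + 2) *\<^sub>R (x - x0) = (real k + 1) *\<^sub>R (v - x0)"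
proof -
  have "(real k + 2) * (1 / (real k + 2)) = 1" "(real k + 2) * (1 - 1 / (real k + 2)) = real k + 1"
    by (simp_all add: field_simps)
  then have "(real k + 2) *\<^sub>R x = x0 + (real k + 1) *\<^sub>R v"
    unfolding assms scaleR_add_right scaleR_scaleR by simp
  then show ?thesis by (simp add: algebra_simps scaleR_2)
qed

lemma halpern_potential_step:
  fixes a b d d' e :: "'a::real_inner" and n \<alpha> :: real
  assumes n: "n \<ge> 0" and \<alpha>: "\<alpha> \<ge> 0"
    and coco: "inner (b - a) (d' - d) \<ge> \<alpha> * (norm (b - a))\<^sup>2"
    and rel: "(n + 1) *\<^sub>R d' = n *\<^sub>R (d - \<alpha> *\<^sub>R a + \<alpha> *\<^sub>R e)"
  shows "(n + 1) * inner b d' + \<alpha> * n * (n + 1) / 2 * (norm b)\<^sup>2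
    \<le> n * inner a d + \<alpha> * (n - 1) * n / 2 * (norm a)\<^sup>2
       + \<alpha> * n * (n + 1) / 2 * (norm e)\<^sup>2 + \<alpha> * n * inner a e"
proof -
  have "d' = (n + 1) *\<^sub>R d' - n *\<^sub>R d'" by (simp add: algebra_simps)
  also have "\<dots> = n *\<^sub>R (d - d') - (n * \<alpha>) *\<^sub>R (a - e)"
    unfolding rel by (simp add: algebra_simps)
  finally have d': "d' = n *\<^sub>R (d - d') - (n * \<alpha>) *\<^sub>R (a - e)" .
  have "n * inner (b - a) (d - d') \<le> - (n * \<alpha>) * (norm (b - a))\<^sup>2"
    using mult_left_mono[OF coco n] by (simp add: inner_diff_right algebra_simps)
  then have "inner (b - a) d' \<le> (n * \<alpha>) * - inner (b - a) (b - e)"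
    by (subst d') (simp add: inner_diff_right power2_norm_eq_inner algebra_simps)
  also have "\<dots> \<le> (n * \<alpha>) * (((norm a)\<^sup>2 + (norm e)\<^sup>2 - (norm b)\<^sup>2) / 2)"
  proof (rule mult_left_mono)
    have "0 \<le> (norm (b - a - e))\<^sup>2" by simp
    then show "- inner (b - a) (b - e) \<le> ((norm a)\<^sup>2 + (norm e)\<^sup>2 - (norm b)\<^sup>2) / 2"
      by (simp add: power2_norm_eq_inner inner_diff_left inner_diff_right inner_commute
          algebra_simps)
  qed (use n \<alpha> in simp)
  finally have "(n + 1) * inner (b - a) d'
      \<le> (n + 1) * ((n * \<alpha>) * (((norm a)\<^sup>2 + (norm e)\<^sup>2 - (norm b)\<^sup>2) / 2))"
    using n by (simp add: mult_left_mono)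
  moreover have "n * inner a d = (n + 1) * inner a d' + n * \<alpha> * (norm a)\<^sup>2 - n * \<alpha> * inner a e"
  proof -
    have "inner a ((n + 1) *\<^sub>R d') = inner a (n *\<^sub>R (d - \<alpha> *\<^sub>R a + \<alpha> *\<^sub>R e))"
      by (simp only: rel)
    then show ?thesis
      by (simp add: inner_diff_right inner_add_right power2_norm_eq_inner algebra_simps)
  qed
  ultimately show ?thesis
    by (simp add: inner_diff_left field_simps) (simp add: algebra_simps)?
qed

lemma inner_young:
  fixes a e :: "'a::real_inner" and n \<gamma> :: real
  assumes \<gamma>: "\<gamma> > 0"
  shows "n * inner a e \<le> \<gamma> / 2 * (norm a)\<^sup>2 + n\<^sup>2 / (2 * \<gamma>) * (norm e)\<^sup>2"
proof -
  have "0 \<le> inner (\<gamma> *\<^sub>R a - n *\<^sub>R e) (\<gamma> *\<^sub>R a - n *\<^sub>R e)" by simp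
  then have "2 * \<gamma> * (n * inner a e) \<le> \<gamma>\<^sup>2 * inner a a + n\<^sup>2 * inner e e"
    by (simp add: inner_diff_left inner_diff_right inner_commute power2_eq_square algebra_simps)
  then have "n * inner a e \<le> (\<gamma>\<^sup>2 * inner a a + n\<^sup>2 * inner e e) / (2 * \<gamma>)"
    using \<gamma> by (simp add: pos_le_divide_eq algebra_simps)
  also have "\<dots> = \<gamma> / 2 * inner a a + n\<^sup>2 / (2 * \<gamma>) * inner e e"
    using \<gamma> by (simp add: field_simps power2_eq_square)
  finally show ?thesis by (simp add: power2_norm_eq_inner)
qed

lemma quadratic_residual_bound:
  fixes \<alpha> K t D S :: real
  assumes \<alpha>: "\<alpha> > 0" and K: "K > 0"
    and V: "\<alpha> * K * (K + 1) / 2 * t\<^sup>2 - (K + 1) * (t * D) \<le> S"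
  shows "\<alpha> * K * (K + 1) / 4 * t\<^sup>2 \<le> (K + 1) / (K * \<alpha>) * D\<^sup>2 + S"
proof -
  have \<alpha>K: "\<alpha> * K > 0" using \<alpha> K by simp
  have "0 \<le> (\<alpha> * K * t / 2 - D)\<^sup>2" by simp
  then have "(\<alpha> * K) * (t * D) \<le> (\<alpha> * K)\<^sup>2 / 4 * t\<^sup>2 + D\<^sup>2"
    by (simp add: power2_eq_square algebra_simps)
  then have "t * D \<le> ((\<alpha> * K)\<^sup>2 / 4 * t\<^sup>2 + D\<^sup>2) / (\<alpha> * K)"
    using \<alpha>K by (simp add: pos_le_divide_eq mult.commute)
  also have "\<dots> = \<alpha> * K / 4 * t\<^sup>2 + D\<^sup>2 / (\<alpha> * K)"
    using \<alpha> K by (simp add: field_simps power2_eq_square)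
  finally have "(K + 1) * (t * D) \<le> (K + 1) * (\<alpha> * K / 4 * t\<^sup>2 + D\<^sup>2 / (\<alpha> * K))"
    using K by (simp add: mult_left_mono)
  moreover have "(K + 1) * (\<alpha> * K / 4 * t\<^sup>2 + D\<^sup>2 / (\<alpha> * K))
      = \<alpha> * K * (K + 1) / 4 * t\<^sup>2 + (K + 1) / (K * \<alpha>) * D\<^sup>2"
    by (simp add: field_simps)
  ultimately show ?thesis using V by linarith
qed

lemma inexact_halpern_residual_bound:
  fixes J :: "'a::real_inner \<Rightarrow> 'a" and x y :: "nat \<Rightarrow> 'a"
  assumes \<alpha>: "\<alpha> > 0" and \<gamma>: "\<gamma> > 0" and K: "K \<ge> 1"
    and coco: "cocoercive \<alpha> (\<lambda>z. z - J z)" and xs: "J xs = xs"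
    and x0: "x 0 = x0"
    and step: "\<And>k. x (Suc k) = (1 / (real k + 2)) *\<^sub>R x0
                 + (1 - 1 / (real k + 2)) *\<^sub>R ((1 - \<alpha>) *\<^sub>R x k + \<alpha> *\<^sub>R y k)"
  shows "\<alpha> * real K * (real K + 1) / 4 * (norm (x K - J (x K)))\<^sup>2
    \<le> (real K + 1) / (real K * \<alpha>) * (norm (xs - x0))\<^sup>2
       + (\<Sum>k<K. \<alpha> * (\<gamma> + 1) / (2 * \<gamma>) * (real k + 1) * (real k + 2) * (norm (y k - J (x k)))\<^sup>2
                 + \<gamma> * \<alpha> / 2 * (norm (x k - J (x k)))\<^sup>2)"
proof -
  define r where "r k = x k - J (x k)" for k
  define e where "e k = y k - J (x k)" for k
  define V where "V k = (real k + 1) * inner (r k) (x k - x0)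
                      + \<alpha> * real k * (real k + 1) / 2 * (norm (r k))\<^sup>2" for k
  define w where "w k = \<alpha> * (\<gamma> + 1) / (2 * \<gamma>) * (real k + 1) * (real k + 2) * (norm (e k))\<^sup>2
                      + \<gamma> * \<alpha> / 2 * (norm (r k))\<^sup>2" for k
  have V_step: "V (Suc k) \<le> V k + w k" for k
  proof -
    define n where "n = real k + 1"
    have n: "n \<ge> 0" by (simp add: n_def)
    have "(1 - \<alpha>) *\<^sub>R x k + \<alpha> *\<^sub>R y k = x k - \<alpha> *\<^sub>R r k + \<alpha> *\<^sub>R e k"
      by (simp add: r_def e_def algebra_simps)
    then have "(real k + 2) *\<^sub>R (x (Suc k) - x0) = n *\<^sub>R ((x k - \<alpha> *\<^sub>R r k + \<alpha> *\<^sub>R e k) - x0)"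
      using halpern_step_shift[OF step[of k]] by (simp only: n_def)
    moreover have "real k + 2 = n + 1" by (simp add: n_def)
    ultimately have "(n + 1) *\<^sub>R (x (Suc k) - x0) = n *\<^sub>R ((x k - x0) - \<alpha> *\<^sub>R r k + \<alpha> *\<^sub>R e k)"
      by (simp add: algebra_simps)
    moreover have "inner (r (Suc k) - r k) ((x (Suc k) - x0) - (x k - x0))
        \<ge> \<alpha> * (norm (r (Suc k) - r k))\<^sup>2"
      using coco unfolding cocoercive_def r_def by simp
    ultimately have "(n + 1) * inner (r (Suc k)) (x (Suc k) - x0)
          + \<alpha> * n * (n + 1) / 2 * (norm (r (Suc k)))\<^sup>2
        \<le> n * inner (r k) (x k - x0) + \<alpha> * (n - 1) * n / 2 * (norm (r k))\<^sup>2
          + \<alpha> * n * (n + 1) / 2 * (norm (e k))\<^sup>2 + \<alpha> * n * inner (r k) (e k)"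
      using \<alpha> n by (intro halpern_potential_step) auto
    moreover have "\<alpha> * (n * inner (r k) (e k))
        \<le> \<alpha> * (\<gamma> / 2 * (norm (r k))\<^sup>2 + n\<^sup>2 / (2 * \<gamma>) * (norm (e k))\<^sup>2)"
      using \<alpha> inner_young[OF \<gamma>] by (simp add: mult_left_mono)
    moreover have "\<alpha> * n * (n + 1) / 2 + \<alpha> * n\<^sup>2 / (2 * \<gamma>) \<le> \<alpha> * (\<gamma> + 1) / (2 * \<gamma>) * n * (n + 1)"
      using \<alpha> \<gamma> n by (simp add: field_simps power2_eq_square)
    then have "(\<alpha> * n * (n + 1) / 2 + \<alpha> * n\<^sup>2 / (2 * \<gamma>)) * (norm (e k))\<^sup>2
        \<le> \<alpha> * (\<gamma> + 1) / (2 * \<gamma>) * n * (n + 1) * (norm (e k))\<^sup>2"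
      by (rule mult_right_mono) simp_all
    ultimately show ?thesis
      unfolding V_def w_def n_def by (simp add: algebra_simps)
  qed
  have V_bound: "V m \<le> (\<Sum>k<m. w k)" for m
  proof (induction m)
    case 0 then show ?case by (simp add: V_def x0)
  next
    case (Suc m) then show ?case using V_step[of m] by simp
  qed
  have "inner (r K) (x K - xs) \<ge> 0"
    using cocoercive_inner_nonneg[OF coco] \<alpha> xs unfolding r_def by simp
  moreover have "inner (r K) (xs - x0) \<ge> - (norm (r K) * norm (xs - x0))"
    using Cauchy_Schwarz_ineq2[of "r K" "xs - x0"] by linarith
  ultimately have "inner (r K) (x K - x0) \<ge> - (norm (r K) * norm (xs - x0))"
    by (simp add: inner_diff_right)
  then have "(real K + 1) * - (norm (r K) * norm (xs - x0)) \<le> (real K + 1) * inner (r K) (x K - x0)"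
    by (rule mult_left_mono) simp
  then have "\<alpha> * real K * (real K + 1) / 2 * (norm (r K))\<^sup>2
      - (real K + 1) * (norm (r K) * norm (xs - x0)) \<le> V K"
    unfolding V_def by simp
  then show ?thesis
    using quadratic_residual_bound[OF \<alpha>, of "real K"] V_bound[of K] K
    unfolding w_def r_def e_def by fastforce
qed

lemma subalgebra_hist:
  assumes "\<And>i. x i \<in> borel_measurable M"
  shows "subalgebra M (hist M x k)"
proof -
  define \<Sigma> where "\<Sigma> = (\<Union>i\<in>{..k}. {x i -` B \<inter> space M | B. B \<in> sets borel})"
  have "\<Sigma> \<subseteq> sets M" unfolding \<Sigma>_def using measurable_sets[OF assms] by blast
  moreover have "\<Sigma> \<subseteq> Pow (space M)" unfolding \<Sigma>_def by auto
  ultimately show ?thesis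
    unfolding subalgebra_def hist_def \<Sigma>_def[symmetric]
    using sets.sigma_sets_subset by (simp add: sets_measure_of space_measure_of_conv)
qed

lemma (in prob_space) nn_integral_le_of_nn_cond_exp_le:
  assumes F: "subalgebra M F" and f: "f \<in> borel_measurable M"
    and le: "AE w in M. nn_cond_exp M F f w \<le> g w"
  shows "(\<integral>\<^sup>+ w. f w \<partial>M) \<le> (\<integral>\<^sup>+ w. g w \<partial>M)"
proof -
  interpret F: finite_measure_subalgebra M F
    using F by unfold_locales
  have "(\<integral>\<^sup>+ w. f w \<partial>M) = (\<integral>\<^sup>+ w. 1 * nn_cond_exp M F f w \<partial>M)"
    using F.nn_cond_exp_intg[of "\<lambda>_. 1" f] f by simp
  also have "\<dots> \<le> (\<integral>\<^sup>+ w. g w \<partial>M)"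
    using le by (auto intro!: nn_integral_mono_AE)
  finally show ?thesis .
qed

lemma (in prob_space) nn_integral_affine_bound:
  fixes f :: "'a \<Rightarrow> real" and g h :: "nat \<Rightarrow> 'a \<Rightarrow> real" and a b :: "nat \<Rightarrow> real"
  assumes nonneg: "c \<ge> 0" "C \<ge> 0" "\<And>k. a k \<ge> 0" "\<And>k. b k \<ge> 0"
      "\<And>k w. g k w \<ge> 0" "\<And>k w. h k w \<ge> 0"
    and [measurable]: "f \<in> borel_measurable M"
      "\<And>k. g k \<in> borel_measurable M" "\<And>k. h k \<in> borel_measurable M"
    and bound: "\<And>w. w \<in> space M \<Longrightarrow> c * f w \<le> C + (\<Sum>k<n. a k * g k w + b k * h k w)"
  shows "ennreal c * (\<integral>\<^sup>+ w. ennreal (f w) \<partial>M)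
    \<le> ennreal C + (\<Sum>k<n. ennreal (a k) * (\<integral>\<^sup>+ w. ennreal (g k w) \<partial>M)
                         + ennreal (b k) * (\<integral>\<^sup>+ w. ennreal (h k w) \<partial>M))"
proof -
  have "ennreal c * (\<integral>\<^sup>+ w. ennreal (f w) \<partial>M) = (\<integral>\<^sup>+ w. ennreal (c * f w) \<partial>M)"
    using nonneg by (simp add: nn_integral_cmult ennreal_mult')
  also have "\<dots> \<le> (\<integral>\<^sup>+ w. ennreal C
      + (\<Sum>k<n. ennreal (a k) * ennreal (g k w) + ennreal (b k) * ennreal (h k w)) \<partial>M)"
  proof (rule nn_integral_mono)
    fix w assume "w \<in> space M"
    then have "ennreal (c * f w) \<le> ennreal (C + (\<Sum>k<n. a k * g k w + b k * h k w))"
      by (intro ennreal_leI bound)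
    also have "\<dots> = ennreal C + (\<Sum>k<n. ennreal (a k) * ennreal (g k w) + ennreal (b k) * ennreal (h k w))"
      using nonneg by (simp add: sum_nonneg ennreal_mult flip: sum_ennreal)
    finally show "ennreal (c * f w) \<le> \<dots>" .
  qed
  also have "\<dots> = ennreal C + (\<Sum>k<n. ennreal (a k) * (\<integral>\<^sup>+ w. ennreal (g k w) \<partial>M)
                         + ennreal (b k) * (\<integral>\<^sup>+ w. ennreal (h k w) \<partial>M))"
    by (simp add: nn_integral_add nn_integral_sum nn_integral_cmult emeasure_space_1)
  finally show ?thesis .
qed

theorem lemmaC3:
  fixes F :: "'a::euclidean_space \<Rightarrow> 'a" and G :: "'a \<Rightarrow> 'a set"
    and L \<rho> \<eta> \<alpha> \<gamma> :: real and \<beta> :: "nat \<Rightarrow> real"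
    and M :: "'w measure" and x :: "nat \<Rightarrow> 'w \<Rightarrow> 'a" and Jt :: "nat \<Rightarrow> 'w \<Rightarrow> 'a"
    and \<epsilon> :: "nat \<Rightarrow> 'w \<Rightarrow> real" and x0 xstar :: 'a and K :: nat
  assumes lip: "L-lipschitz_on UNIV F"
    and G_mm: "maximal_monotone_op G"
    and sol_ne: "\<exists>z. 0 \<in> op_plus F G z"
    and cohypo: "maximal_cohypomonotone_op \<rho> (op_plus F G)"
    and rho_pos: "\<rho> > 0"
    and eta: "\<eta> > \<rho>"
    and alpha_def: "\<alpha> = 1 - \<rho> / \<eta>"
    and beta_def: "\<And>k. \<beta> k = 1 / (real k + 2)"
    and xstar: "0 \<in> op_plus F G xstar"
    and P: "prob_space M"
    and x_meas: "\<And>k. x k \<in> borel_measurable M"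
    and x_init: "\<And>w. w \<in> space M \<Longrightarrow> x 0 w = x0"
    and iter: "\<And>k w. w \<in> space M \<Longrightarrow>
        x (Suc k) w = \<beta> k *\<^sub>R x0 + (1 - \<beta> k) *\<^sub>R
           ((1 - \<alpha>) *\<^sub>R x k w + \<alpha> *\<^sub>R Jt k w)"
    and Jt_meas: "\<And>k. Jt k \<in> borel_measurable M"
    and eps_meas: "\<And>k. \<epsilon> k \<in> borel_measurable (hist M x k)"
    and err: "\<And>k. AE w in M.
        nn_cond_exp M (hist M x k)
          (\<lambda>w. ennreal ((norm (Jt k w - resolvent (op_scale \<eta> (op_plus F G)) (x k w)))\<^sup>2)) w
        \<le> ennreal ((\<epsilon> k w)\<^sup>2)"
    and gamma: "\<gamma> > 0"
    and K: "K \<ge> 1"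
  shows "ennreal (\<alpha> * real K * (real K + 1) / 4) *
           (\<integral>\<^sup>+ w. ennreal ((norm (x K w - resolvent (op_scale \<eta> (op_plus F G)) (x K w)))\<^sup>2) \<partial>M)
         \<le> ennreal ((real K + 1) / (real K * \<alpha>) * (norm (xstar - x0))\<^sup>2)
           + (\<Sum>k<K. ennreal (\<alpha> * (\<gamma> + 1) / (2 * \<gamma>) * (real k + 1) * (real k + 2)) *
                       (\<integral>\<^sup>+ w. ennreal ((\<epsilon> k w)\<^sup>2) \<partial>M)
                    + ennreal (\<gamma> * \<alpha> / 2) *
                       (\<integral>\<^sup>+ w. ennreal ((norm (x k w - resolvent (op_scale \<eta> (op_plus F G)) (x k w)))\<^sup>2) \<partial>M))"
proof -
  interpret prob_space M by (rule P)
  define J where "J = resolvent (op_scale \<eta> (op_plus F G))"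
  have \<alpha>: "\<alpha> > 0" using eta rho_pos by (simp add: alpha_def field_simps)
  have coco: "cocoercive \<alpha> (\<lambda>z. z - J z)"
    unfolding J_def alpha_def
    using maximal_cohypomonotone_resolvent_residual_cocoercive[OF cohypo _ eta] rho_pos by simp
  have J_xstar: "J xstar = xstar"
    unfolding J_def using cohypo xstar eta
    by (intro resolvent_op_scale_eqI[where u = 0]) (auto simp: maximal_cohypomonotone_op_def)
  have "continuous_on UNIV (\<lambda>z. z - (z - J z))"
    by (intro continuous_intros lipschitz_on_continuous_on[OF cocoercive_lipschitz[OF \<alpha> coco]])
  then have [measurable]: "J \<in> borel_measurable borel"
    by (simp add: borel_measurable_continuous_onI)
  note [measurable] = x_meas Jt_meas
  have err_int: "(\<integral>\<^sup>+ w. ennreal ((norm (Jt k w - J (x k w)))\<^sup>2) \<partial>M) \<le> (\<integral>\<^sup>+ w. ennreal ((\<epsilon> k w)\<^sup>2) \<partial>M)"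
    for k
    using err[of k] unfolding J_def[symmetric]
    by (intro nn_integral_le_of_nn_cond_exp_le[OF subalgebra_hist[OF x_meas]]) measurable
  have "ennreal (\<alpha> * real K * (real K + 1) / 4) * (\<integral>\<^sup>+ w. ennreal ((norm (x K w - J (x K w)))\<^sup>2) \<partial>M)
    \<le> ennreal ((real K + 1) / (real K * \<alpha>) * (norm (xstar - x0))\<^sup>2)
       + (\<Sum>k<K. ennreal (\<alpha> * (\<gamma> + 1) / (2 * \<gamma>) * (real k + 1) * (real k + 2))
                   * (\<integral>\<^sup>+ w. ennreal ((norm (Jt k w - J (x k w)))\<^sup>2) \<partial>M)
                + ennreal (\<gamma> * \<alpha> / 2) * (\<integral>\<^sup>+ w. ennreal ((norm (x k w - J (x k w)))\<^sup>2) \<partial>M))"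
    using \<alpha> gamma K
    by (intro nn_integral_affine_bound inexact_halpern_residual_bound[OF \<alpha> gamma K coco J_xstar])
       (auto simp: x_init iter beta_def)
  also have "\<dots> \<le> ennreal ((real K + 1) / (real K * \<alpha>) * (norm (xstar - x0))\<^sup>2)
       + (\<Sum>k<K. ennreal (\<alpha> * (\<gamma> + 1) / (2 * \<gamma>) * (real k + 1) * (real k + 2))
                   * (\<integral>\<^sup>+ w. ennreal ((\<epsilon> k w)\<^sup>2) \<partial>M)
                + ennreal (\<gamma> * \<alpha> / 2) * (\<integral>\<^sup>+ w. ennreal ((norm (x k w - J (x k w)))\<^sup>2) \<partial>M))"
    by (intro add_left_mono sum_mono add_right_mono mult_left_mono err_int) simp
  finally show ?thesis unfolding J_def .
qed

end
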